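(* Let $(A_i,\omega_i)$, $i=1,2$, be commutative unital baric algebras over $K$. Then the map $(I,J)\mapsto I\bowtie J=\{(a,b)\in A_1\bowtie A_2: a\in I,\ b\in J\}$ is a bijection from $\mathcal{I}(A_1,\omega_1)\times\mathcal{I}(A_2,\omega_2)$ onto $\mathcal{I}(A_1\bowtie A_2,\omega_1\bowtie\omega_2)\setminus\{\operatorname{Ker}(\omega_1\bowtie\omega_2)\}$, with inverse $I\mapsto(I_1,I_2)$.
   Context: A baric algebra over a field $K$ is a pair $(A,\omega)$ where $A$ is a (not necessarily associative) $K$-algebra and $\omega:A\to K$ is a nonzero $K$-algebra homomorphism. For baric algebras $(A_1,\omega_1),(A_2,\omega_2)$, $A_1\bowtie A_2$ denotes the vector space $A_1\oplus A_2$ with product $(a_1,a_2)(b_1,b_2)=(a_1b_1+\omega_2(b_2)a_1,\ a_2b_2+\omega_1(b_1)a_2)$, and $\omega_1\bowtie\omega_2(a_1,a_2)=\omega_1(a_1)+\omega_2(a_2)$. For a baric algebra $(A,\omega)$, $\mathcal{I}(A,\omega)$ is the set of two-sided ideals $I$ of $A$ with $I\subseteq\operatorname{Ker}\omega$. For $I\subseteq A_1\bowtie A_2$, $I_1=\{a_1:\exists a_2,\ (a_1,a_2)\in I\}$ and $I_2=\{a_2:\exists a_1,\ (a_1,a_2)\in I\}$. *)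

theory Defs
  imports Main "HOL.Vector_Spaces" "HOL-Library.Product_Plus"
begin

definition is_algebra :: "('k::field \<Rightarrow> 'a::ab_group_add \<Rightarrow> 'a) \<Rightarrow> ('a \<Rightarrow> 'a \<Rightarrow> 'a) \<Rightarrow> bool" where
  "is_algebra s m \<longleftrightarrow> Vector_Spaces.vector_space s \<and>
     (\<forall>x y z. m (x + y) z = m x z + m y z) \<and>
     (\<forall>x y z. m x (y + z) = m x y + m x z) \<and>
     (\<forall>c x y. m (s c x) y = s c (m x y)) \<and>
     (\<forall>c x y. m x (s c y) = s c (m x y))"

definition alg_hom_to_field :: "('k::field \<Rightarrow> 'a::ab_group_add \<Rightarrow> 'a) \<Rightarrow> ('a \<Rightarrow> 'a \<Rightarrow> 'a) \<Rightarrow> ('a \<Rightarrow> 'k) \<Rightarrow> bool" where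
  "alg_hom_to_field s m \<omega> \<longleftrightarrow>
     (\<forall>x y. \<omega> (x + y) = \<omega> x + \<omega> y) \<and>
     (\<forall>c x. \<omega> (s c x) = c * \<omega> x) \<and>
     (\<forall>x y. \<omega> (m x y) = \<omega> x * \<omega> y)"

definition baric_algebra :: "('k::field \<Rightarrow> 'a::ab_group_add \<Rightarrow> 'a) \<Rightarrow> ('a \<Rightarrow> 'a \<Rightarrow> 'a) \<Rightarrow> ('a \<Rightarrow> 'k) \<Rightarrow> bool" where
  "baric_algebra s m \<omega> \<longleftrightarrow> is_algebra s m \<and> alg_hom_to_field s m \<omega> \<and> (\<exists>x. \<omega> x \<noteq> 0)"

definition alg_commutative :: "('a \<Rightarrow> 'a \<Rightarrow> 'a) \<Rightarrow> bool" where
  "alg_commutative m \<longleftrightarrow> (\<forall>x y. m x y = m y x)"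

definition alg_unital :: "('a \<Rightarrow> 'a \<Rightarrow> 'a) \<Rightarrow> bool" where
  "alg_unital m \<longleftrightarrow> (\<exists>e. \<forall>x. m e x = x \<and> m x e = x)"

definition alg_ideal :: "('k::field \<Rightarrow> 'a::ab_group_add \<Rightarrow> 'a) \<Rightarrow> ('a \<Rightarrow> 'a \<Rightarrow> 'a) \<Rightarrow> 'a set \<Rightarrow> bool" where
  "alg_ideal s m I \<longleftrightarrow> 0 \<in> I \<and>
     (\<forall>x\<in>I. \<forall>y\<in>I. x + y \<in> I) \<and>
     (\<forall>c. \<forall>x\<in>I. s c x \<in> I) \<and>
     (\<forall>x\<in>I. \<forall>y. m x y \<in> I \<and> m y x \<in> I)"

definition baric_ideals :: "('k::field \<Rightarrow> 'a::ab_group_add \<Rightarrow> 'a) \<Rightarrow> ('a \<Rightarrow> 'a \<Rightarrow> 'a) \<Rightarrow> ('a \<Rightarrow> 'k) \<Rightarrow> 'a set set" where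
  "baric_ideals s m \<omega> = {I. alg_ideal s m I \<and> I \<subseteq> {x. \<omega> x = 0}}"

definition join_scale :: "('k \<Rightarrow> 'a \<Rightarrow> 'a) \<Rightarrow> ('k \<Rightarrow> 'b \<Rightarrow> 'b) \<Rightarrow> 'k \<Rightarrow> 'a \<times> 'b \<Rightarrow> 'a \<times> 'b" where
  "join_scale s1 s2 c p = (s1 c (fst p), s2 c (snd p))"

definition join_mult :: "('k \<Rightarrow> 'a \<Rightarrow> 'a) \<Rightarrow> ('a \<Rightarrow> 'a \<Rightarrow> 'a) \<Rightarrow> ('a \<Rightarrow> 'k)
    \<Rightarrow> ('k \<Rightarrow> 'b \<Rightarrow> 'b) \<Rightarrow> ('b \<Rightarrow> 'b \<Rightarrow> 'b) \<Rightarrow> ('b \<Rightarrow> 'k)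
    \<Rightarrow> 'a \<times> 'b \<Rightarrow> 'a \<times> 'b \<Rightarrow> ('a::plus) \<times> ('b::plus)" where
  "join_mult s1 m1 \<omega>1 s2 m2 \<omega>2 p q =
     (m1 (fst p) (fst q) + s1 (\<omega>2 (snd q)) (fst p),
      m2 (snd p) (snd q) + s2 (\<omega>1 (fst q)) (snd p))"

definition join_omega :: "('a \<Rightarrow> 'k::plus) \<Rightarrow> ('b \<Rightarrow> 'k) \<Rightarrow> 'a \<times> 'b \<Rightarrow> 'k" where
  "join_omega \<omega>1 \<omega>2 p = \<omega>1 (fst p) + \<omega>2 (snd p)"

definition ideal_join :: "'a set \<Rightarrow> 'b set \<Rightarrow> ('a \<times> 'b) set" where
  "ideal_join I J = {(a, b). a \<in> I \<and> b \<in> J}"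

definition proj1 :: "('a \<times> 'b) set \<Rightarrow> 'a set" where
  "proj1 I = {a1. \<exists>a2. (a1, a2) \<in> I}"

definition proj2 :: "('a \<times> 'b) set \<Rightarrow> 'b set" where
  "proj2 I = {a2. \<exists>a1. (a1, a2) \<in> I}"

end

theory Submission
  imports Defs
begin

(* Write W for the weight of A1 \<bowtie> A2 and u = (e1, -e2), where e1, e2 are the units.
   The direction (I, J) \<mapsto> I \<bowtie> J needs no units: I \<bowtie> J is an ideal inside Ker W because
   the cross terms of the product only rescale by weights, and it differs from Ker W
   because u \<in> Ker W while e1 \<notin> I.  Conversely let K be an ideal inside Ker W.
   (a) If u \<in> K then K = Ker W, since every p = (x, y) \<in> Ker W is the combination
       p = u(x,0) - u(0,y) - \<omega>1(x) u  of multiples of u.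
   (b) For p = (a1, a2) \<in> Ker W one has (e1,0)p + (0,e2)p - p = \<omega>2(a2) u, so if K is
       proper then every element of K has both weights 0.
   (c) Then (e1,0)p = (a1,0) and (0,e2)p = (0,a2), so K is the join of its two slices
       {a. (a,0) \<in> K} and {b. (0,b) \<in> K}, which are ideals of A1 and A2. *)

lemma (in vector_space) alg_ideal_subspace: "alg_ideal scale m I \<Longrightarrow> subspace I"
  unfolding alg_ideal_def subspace_def by blast

lemma proj_ideal_join:
  assumes "0 \<in> I" and "0 \<in> J"
  shows "proj1 (ideal_join I J) = I" and "proj2 (ideal_join I J) = J"
  using assms unfolding proj1_def proj2_def ideal_join_def by auto

locale baric =
  fixes s :: "'k::field \<Rightarrow> 'a::ab_group_add \<Rightarrow> 'a" and m :: "'a \<Rightarrow> 'a \<Rightarrow> 'a" and \<omega> :: "'a \<Rightarrow> 'k"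
  assumes baric: "baric_algebra s m \<omega>"
begin

sublocale vector_space s
  using baric unfolding baric_algebra_def is_algebra_def by blast

lemma weight_add: "\<omega> (x + y) = \<omega> x + \<omega> y"
  and weight_mult: "\<omega> (m x y) = \<omega> x * \<omega> y"
  using baric unfolding baric_algebra_def alg_hom_to_field_def by auto

lemma mult_add_left: "m (x + y) z = m x z + m y z"
  and mult_add_right: "m x (y + z) = m x y + m x z"
  using baric unfolding baric_algebra_def is_algebra_def by auto

lemma weight_zero [simp]: "\<omega> 0 = 0"
  using weight_add[of 0 0] by (metis add_cancel_right_right)

lemma weight_minus [simp]: "\<omega> (- x) = - \<omega> x"
  using weight_add[of x "- x"] by (simp add: add.inverse_unique)

lemma mult_zero_left [simp]: "m 0 x = 0"
  using mult_add_left[of 0 0 x] by simp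

lemma mult_zero_right [simp]: "m x 0 = 0"
  using mult_add_right[of x 0 0] by simp

lemma mult_minus_left [simp]: "m (- x) y = - m x y"
  using mult_add_left[of x "- x" y] by (simp add: add.inverse_unique)

text \<open>Since the weight is nonzero somewhere, a left unit has weight 1.\<close>
lemma unit_weight:
  assumes unit: "\<And>x. m e x = x"
  shows "\<omega> e = 1"
proof -
  obtain x where "\<omega> x \<noteq> 0" using baric unfolding baric_algebra_def by blast
  moreover have "\<omega> x = \<omega> e * \<omega> x" using weight_mult[of e x] unit by simp
  ultimately show ?thesis by simp
qed

end

locale baric_join = A1: baric s1 m1 \<omega>1 + A2: baric s2 m2 \<omega>2
  for s1 :: "'k::field \<Rightarrow> 'a::ab_group_add \<Rightarrow> 'a" and m1 \<omega>1
    and s2 :: "'k \<Rightarrow> 'b::ab_group_add \<Rightarrow> 'b" and m2 \<omega>2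
begin

abbreviation "jscale \<equiv> join_scale s1 s2"
abbreviation "jmult \<equiv> join_mult s1 m1 \<omega>1 s2 m2 \<omega>2"
abbreviation "jweight \<equiv> join_omega \<omega>1 \<omega>2"
abbreviation "jkernel \<equiv> {p. jweight p = 0}"

lemma jscale_Pair [simp]: "jscale c (x, y) = (s1 c x, s2 c y)"
  by (simp add: join_scale_def)

lemma jmult_Pair [simp]:
  "jmult (a1, a2) (b1, b2) = (m1 a1 b1 + s1 (\<omega>2 b2) a1, m2 a2 b2 + s2 (\<omega>1 b1) a2)"
  by (simp add: join_mult_def)

lemma jweight_Pair [simp]: "jweight (x, y) = \<omega>1 x + \<omega>2 y"
  by (simp add: join_omega_def)

sublocale J: vector_space jscale
  by unfold_locales
    (auto simp: join_scale_def A1.scale_right_distrib A2.scale_right_distrib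
      A1.scale_left_distrib A2.scale_left_distrib)

lemma ideal_join_baric:
  assumes I: "I \<in> baric_ideals s1 m1 \<omega>1" and J: "J \<in> baric_ideals s2 m2 \<omega>2"
  shows "ideal_join I J \<in> baric_ideals jscale jmult jweight"
proof -
  have I_ideal: "alg_ideal s1 m1 I" and I_ker: "\<And>x. x \<in> I \<Longrightarrow> \<omega>1 x = 0"
    using I unfolding baric_ideals_def by auto
  have J_ideal: "alg_ideal s2 m2 J" and J_ker: "\<And>y. y \<in> J \<Longrightarrow> \<omega>2 y = 0"
    using J unfolding baric_ideals_def by auto
  have "alg_ideal jscale jmult (ideal_join I J)"
    using I_ideal J_ideal I_ker J_ker
    by (auto simp: alg_ideal_def ideal_join_def zero_prod_def)
  moreover have "ideal_join I J \<subseteq> jkernel"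
    using I_ker J_ker by (auto simp: ideal_join_def)
  ultimately show ?thesis unfolding baric_ideals_def by blast
qed

lemma ideal_join_projections:
  assumes "I \<in> baric_ideals s1 m1 \<omega>1" and "J \<in> baric_ideals s2 m2 \<omega>2"
  shows "(proj1 (ideal_join I J), proj2 (ideal_join I J)) = (I, J)"
  using assms by (simp add: proj_ideal_join baric_ideals_def alg_ideal_def)

lemma join_ideal_closed:
  assumes "alg_ideal jscale jmult K" and "p \<in> K"
  shows "\<And>q. q \<in> K \<Longrightarrow> p + q \<in> K" and "\<And>q. q \<in> K \<Longrightarrow> p - q \<in> K"
    and "\<And>c. jscale c p \<in> K" and "\<And>q. jmult p q \<in> K" and "\<And>q. jmult q p \<in> K"
proof -
  have "J.subspace K" using assms(1) by (rule J.alg_ideal_subspace)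
  then show "\<And>q. q \<in> K \<Longrightarrow> p + q \<in> K" "\<And>q. q \<in> K \<Longrightarrow> p - q \<in> K"
    "\<And>c. jscale c p \<in> K"
    using assms(2) by (auto intro: J.subspace_add J.subspace_diff J.subspace_scale)
  show "\<And>q. jmult p q \<in> K" "\<And>q. jmult q p \<in> K"
    using assms unfolding alg_ideal_def by auto
qed

text \<open>The slices of a baric ideal of A1 \<bowtie> A2 along the two factors are baric ideals:
  the embeddings a \<mapsto> (a, 0) and b \<mapsto> (0, b) are linear, multiplicative and preserve weights.\<close>
lemma slices_baric:
  assumes K: "K \<in> baric_ideals jscale jmult jweight"
  shows "{a. (a, 0) \<in> K} \<in> baric_ideals s1 m1 \<omega>1" and "{b. (0, b) \<in> K} \<in> baric_ideals s2 m2 \<omega>2"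
proof -
  have K_ideal: "alg_ideal jscale jmult K" and K_ker: "K \<subseteq> jkernel"
    using K unfolding baric_ideals_def by auto
  have zero: "(0, 0) \<in> K" using K_ideal by (simp add: alg_ideal_def zero_prod_def)
  have slice1: "(s1 c x, 0) \<in> K" "(m1 x y, 0) \<in> K" "(m1 y x, 0) \<in> K" "\<omega>1 x = 0"
    if "(x, 0) \<in> K" for c x y
    using join_ideal_closed(3)[OF K_ideal that, of c] join_ideal_closed(4,5)[OF K_ideal that, of "(y, 0)"] K_ker that by auto
  have slice2: "(0, s2 c x) \<in> K" "(0, m2 x y) \<in> K" "(0, m2 y x) \<in> K" "\<omega>2 x = 0"
    if "(0, x) \<in> K" for c x y
    using join_ideal_closed(3)[OF K_ideal that, of c] join_ideal_closed(4,5)[OF K_ideal that, of "(0, y)"] K_ker that by auto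
  have add1: "(x + y, 0) \<in> K" if "(x, 0) \<in> K" "(y, 0) \<in> K" for x y
    using join_ideal_closed(1)[OF K_ideal that] by simp
  have add2: "(0, x + y) \<in> K" if "(0, x) \<in> K" "(0, y) \<in> K" for x y
    using join_ideal_closed(1)[OF K_ideal that] by simp
  show "{a. (a, 0) \<in> K} \<in> baric_ideals s1 m1 \<omega>1"
    unfolding baric_ideals_def alg_ideal_def by (simp add: zero slice1 add1 subset_iff)
  show "{b. (0, b) \<in> K} \<in> baric_ideals s2 m2 \<omega>2"
    unfolding baric_ideals_def alg_ideal_def by (simp add: zero slice2 add2 subset_iff)
qed

end

locale unital_baric_join = baric_join +
  fixes e1 e2
  assumes unit1: "\<And>x. m1 e1 x = x" and unit2: "\<And>x. m2 e2 x = x"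
begin

lemma unit_weights [simp]: "\<omega>1 e1 = 1" "\<omega>2 e2 = 1"
  using A1.unit_weight[OF unit1] A2.unit_weight[OF unit2] .

text \<open>The element u = (e1, -e2) has weight 0 but its first component has weight 1; hence
  no join of baric ideals is the whole kernel.\<close>
lemma ideal_join_ne_kernel:
  assumes "I \<subseteq> {x. \<omega>1 x = 0}"
  shows "ideal_join I J \<noteq> jkernel"
proof
  assume "ideal_join I J = jkernel"
  then have "(e1, - e2) \<in> ideal_join I J" by simp
  then show False using assms by (auto simp: ideal_join_def)
qed

lemma anti_unit_generates_kernel:
  assumes K: "alg_ideal jscale jmult K" and u: "(e1, - e2) \<in> K"
  shows "jkernel \<subseteq> K"
proof
  fix p assume "p \<in> jkernel"
  then obtain x y where p: "p = (x, y)" and wy: "\<omega>2 y = - \<omega>1 x"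
    by (cases p) (auto simp: eq_neg_iff_add_eq_0 add.commute)
  have "p = jmult (e1, - e2) (x, 0) - jmult (e1, - e2) (0, y) - jscale (\<omega>1 x) (e1, - e2)"
    by (simp add: p wy unit1 unit2 A2.scale_minus_right)
  also have "\<dots> \<in> K"
    by (intro join_ideal_closed(2)[OF K] join_ideal_closed(3,4)[OF K u])
  finally show "p \<in> K" .
qed

lemma unit_decomposition:
  assumes "jweight (a1, a2) = 0"
  shows "jmult (e1, 0) (a1, a2) + jmult (0, e2) (a1, a2) - (a1, a2) = jscale (\<omega>2 a2) (e1, - e2)"
proof -
  have "\<omega>1 a1 = - \<omega>2 a2" using assms by (simp add: eq_neg_iff_add_eq_0)
  then show ?thesis by (simp add: unit1 unit2 A2.scale_minus_right)
qed

text \<open>In an ideal different from the kernel all second (hence also all first) weights vanish;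
  otherwise some nonzero multiple of u, and thus u itself, would lie in it.\<close>
lemma proper_ideal_weights:
  assumes K: "K \<in> baric_ideals jscale jmult jweight - {jkernel}" and p: "(a1, a2) \<in> K"
  shows "\<omega>2 a2 = 0" and "\<omega>1 a1 = 0"
proof -
  have K_ideal: "alg_ideal jscale jmult K" and K_ker: "K \<subseteq> jkernel" and K_ne: "K \<noteq> jkernel"
    using K unfolding baric_ideals_def by auto
  have w: "jweight (a1, a2) = 0" using K_ker p by blast
  show a2: "\<omega>2 a2 = 0"
  proof (rule ccontr)
    assume t: "\<omega>2 a2 \<noteq> 0"
    have "jmult (e1, 0) (a1, a2) + jmult (0, e2) (a1, a2) - (a1, a2) \<in> K"
      by (intro join_ideal_closed(1,2)[OF K_ideal] join_ideal_closed(5)[OF K_ideal p] p)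
    then have "jscale (\<omega>2 a2) (e1, - e2) \<in> K" by (simp only: unit_decomposition[OF w])
    then have "jscale (1 / \<omega>2 a2) (jscale (\<omega>2 a2) (e1, - e2)) \<in> K"
      by (rule join_ideal_closed(3)[OF K_ideal])
    then have "(e1, - e2) \<in> K" using t by simp
    then have "jkernel \<subseteq> K" by (rule anti_unit_generates_kernel[OF K_ideal])
    with K_ker K_ne show False by blast
  qed
  show "\<omega>1 a1 = 0" using w a2 by simp
qed

lemma proper_ideal_split:
  assumes K: "K \<in> baric_ideals jscale jmult jweight - {jkernel}" and p: "(a1, a2) \<in> K"
  shows "(a1, 0) \<in> K" and "(0, a2) \<in> K"
proof -
  have K_ideal: "alg_ideal jscale jmult K" using K unfolding baric_ideals_def by auto
  have "jmult (e1, 0) (a1, a2) = (a1, 0)" "jmult (0, e2) (a1, a2) = (0, a2)"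
    using proper_ideal_weights[OF K p] by (simp_all add: unit1 unit2)
  then show "(a1, 0) \<in> K" "(0, a2) \<in> K"
    using join_ideal_closed(5)[OF K_ideal p] by metis+
qed

lemma proper_ideal_decomposition:
  assumes K: "K \<in> baric_ideals jscale jmult jweight - {jkernel}"
  shows "proj1 K \<in> baric_ideals s1 m1 \<omega>1" and "proj2 K \<in> baric_ideals s2 m2 \<omega>2"
    and "ideal_join (proj1 K) (proj2 K) = K"
proof -
  have proj1_K: "proj1 K = {a. (a, 0) \<in> K}" and proj2_K: "proj2 K = {b. (0, b) \<in> K}"
    using proper_ideal_split[OF K] unfolding proj1_def proj2_def by blast+
  show "proj1 K \<in> baric_ideals s1 m1 \<omega>1" "proj2 K \<in> baric_ideals s2 m2 \<omega>2"
    unfolding proj1_K proj2_K using slices_baric K by blast+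
  have K_ideal: "alg_ideal jscale jmult K" using K unfolding baric_ideals_def by auto
  show "ideal_join (proj1 K) (proj2 K) = K"
  proof
    show "ideal_join (proj1 K) (proj2 K) \<subseteq> K"
    proof
      fix p assume "p \<in> ideal_join (proj1 K) (proj2 K)"
      then obtain a b where p: "p = (a, 0) + (0, b)" and "(a, 0) \<in> K" "(0, b) \<in> K"
        unfolding proj1_K proj2_K ideal_join_def by auto
      then show "p \<in> K" using join_ideal_closed(1)[OF K_ideal] by blast
    qed
    show "K \<subseteq> ideal_join (proj1 K) (proj2 K)"
      unfolding ideal_join_def proj1_def proj2_def by blast
  qed
qed

lemma ideal_join_proper:
  assumes "I \<in> baric_ideals s1 m1 \<omega>1" and "J \<in> baric_ideals s2 m2 \<omega>2"
  shows "ideal_join I J \<in> baric_ideals jscale jmult jweight - {jkernel}"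
  using ideal_join_baric[OF assms] ideal_join_ne_kernel assms(1)
  unfolding baric_ideals_def by blast

end

theorem proposition5p4:
  fixes s1 :: "'k::field \<Rightarrow> 'a::ab_group_add \<Rightarrow> 'a" and m1 :: "'a \<Rightarrow> 'a \<Rightarrow> 'a" and \<omega>1 :: "'a \<Rightarrow> 'k"
    and s2 :: "'k \<Rightarrow> 'b::ab_group_add \<Rightarrow> 'b" and m2 :: "'b \<Rightarrow> 'b \<Rightarrow> 'b" and \<omega>2 :: "'b \<Rightarrow> 'k"
  assumes "baric_algebra s1 m1 \<omega>1" and "alg_commutative m1" and "alg_unital m1"
    and "baric_algebra s2 m2 \<omega>2" and "alg_commutative m2" and "alg_unital m2"
  defines "S \<equiv> join_scale s1 s2" and "M \<equiv> join_mult s1 m1 \<omega>1 s2 m2 \<omega>2"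
    and "W \<equiv> join_omega \<omega>1 \<omega>2"
  shows "bij_betw (\<lambda>(I, J). ideal_join I J)
           (baric_ideals s1 m1 \<omega>1 \<times> baric_ideals s2 m2 \<omega>2)
           (baric_ideals S M W - {{x. W x = 0}})
       \<and> (\<forall>P \<in> baric_ideals s1 m1 \<omega>1 \<times> baric_ideals s2 m2 \<omega>2.
             (proj1 (ideal_join (fst P) (snd P)), proj2 (ideal_join (fst P) (snd P))) = P)
       \<and> (\<forall>I \<in> baric_ideals S M W - {{x. W x = 0}}. ideal_join (proj1 I) (proj2 I) = I)"
proof -
  obtain e1 where e1: "\<And>x. m1 e1 x = x" using \<open>alg_unital m1\<close> unfolding alg_unital_def by blast
  obtain e2 where e2: "\<And>x. m2 e2 x = x" using \<open>alg_unital m2\<close> unfolding alg_unital_def by blast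
  interpret unital_baric_join s1 m1 \<omega>1 s2 m2 \<omega>2 e1 e2
    by (intro unital_baric_join.intro baric_join.intro baric.intro unital_baric_join_axioms.intro
        assms(1,4) e1 e2)
  have left_inverse: "\<forall>P \<in> baric_ideals s1 m1 \<omega>1 \<times> baric_ideals s2 m2 \<omega>2.
      (proj1 (ideal_join (fst P) (snd P)), proj2 (ideal_join (fst P) (snd P))) = P"
    using ideal_join_projections by auto
  have right_inverse: "\<forall>K \<in> baric_ideals S M W - {{x. W x = 0}}. ideal_join (proj1 K) (proj2 K) = K"
    unfolding S_def M_def W_def using proper_ideal_decomposition(3) by blast
  have "bij_betw (\<lambda>(I, J). ideal_join I J)
      (baric_ideals s1 m1 \<omega>1 \<times> baric_ideals s2 m2 \<omega>2) (baric_ideals S M W - {{x. W x = 0}})"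
  proof (rule bij_betw_byWitness[where f' = "\<lambda>K. (proj1 K, proj2 K)"])
    show "(\<lambda>(I, J). ideal_join I J) ` (baric_ideals s1 m1 \<omega>1 \<times> baric_ideals s2 m2 \<omega>2)
        \<subseteq> baric_ideals S M W - {{x. W x = 0}}"
      unfolding S_def M_def W_def using ideal_join_proper by auto
    show "(\<lambda>K. (proj1 K, proj2 K)) ` (baric_ideals S M W - {{x. W x = 0}})
        \<subseteq> baric_ideals s1 m1 \<omega>1 \<times> baric_ideals s2 m2 \<omega>2"
      unfolding S_def M_def W_def using proper_ideal_decomposition(1,2) by auto
  qed (use left_inverse right_inverse in auto)
  with left_inverse right_inverse show ?thesis by blast
qed

end
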